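(* For every integer $k\ge 1$, let $\mathcal{L}^2(k)=\gcd\{\sum_{i=1}^k L_{n+i}^2 : n \ge 0\}$. Then $$\mathcal{L}^2(k) = \begin{cases} 5F_k, & \text{if $k$ is even},\\ 2, & \text{if $k \equiv 3 \pmod{6}$},\\ 1, & \text{if $k \equiv 1,5 \pmod{6}$}.\end{cases}$$
   Context: $(L_n)$ is the Lucas sequence: $L_0=2$, $L_1=1$, $L_n=L_{n-1}+L_{n-2}$; $(F_n)$ is the Fibonacci sequence: $F_0=0$, $F_1=1$, $F_n=F_{n-1}+F_{n-2}$. *)

theory Defs
  imports "HOL-Number_Theory.Fib"
begin

fun lucas :: "nat \<Rightarrow> nat" where
  "lucas 0 = 2"
| "lucas (Suc 0) = 1"
| "lucas (Suc (Suc n)) = lucas (Suc n) + lucas n"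

definition lucas_sq_gcd :: "nat \<Rightarrow> nat" where
  "lucas_sq_gcd k = Gcd {\<Sum>i=1..k. (lucas (n + i))^2 | n. True}"

end

theory Submission
  imports Defs "HOL-Computational_Algebra.Primes"
begin

text \<open>
  Write \<open>S\<^sub>k(n) = L\<^sub>n\<^sub>+\<^sub>1\<^sup>2 + ... + L\<^sub>n\<^sub>+\<^sub>k\<^sup>2\<close>. By Binet's formulas
  \<open>L\<^sub>m\<^sup>2 = L\<^sub>2\<^sub>m + 2(-1)\<^sup>m\<close>, so \<open>S\<^sub>k(n)\<close> telescopes to \<open>L\<^sub>2\<^sub>n\<^sub>+\<^sub>2\<^sub>k\<^sub>+\<^sub>1 - L\<^sub>2\<^sub>n\<^sub>+\<^sub>1\<close> plus a sign term.
  For even \<open>k\<close> this equals \<open>5 F\<^sub>k F\<^sub>2\<^sub>n\<^sub>+\<^sub>k\<^sub>+\<^sub>1\<close>, and \<open>F\<^sub>k\<^sub>+\<^sub>1\<close>, \<open>F\<^sub>k\<^sub>+\<^sub>3\<close> are coprime.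
  For odd \<open>k\<close> it equals \<open>L\<^sub>k L\<^sub>2\<^sub>n\<^sub>+\<^sub>k\<^sub>+\<^sub>1 - 2(-1)\<^sup>n\<close>; then \<open>S\<^sub>k(0) + S\<^sub>k(2) - 3 S\<^sub>k(1) = -10\<close>,
  no \<open>S\<^sub>k(n)\<close> is divisible by 5 because \<open>L\<^sub>m\<^sup>2 = 5 F\<^sub>m\<^sup>2 + 4(-1)\<^sup>m\<close>, and the parity of
  \<open>S\<^sub>k(n)\<close> is that of \<open>L\<^sub>k L\<^sub>2\<^sub>n\<^sub>+\<^sub>k\<^sub>+\<^sub>1\<close>, where \<open>L\<^sub>m\<close> is even iff \<open>3 | m\<close>.
\<close>

definition \<phi> :: real where "\<phi> = (1 + sqrt 5) / 2"
definition \<psi> :: real where "\<psi> = (1 - sqrt 5) / 2"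

lemma phi_times_psi: "\<phi> * \<psi> = -1"
  by (simp add: \<phi>_def \<psi>_def field_simps)

lemma lucas_closed_form: "real (lucas n) = \<phi> ^ n + \<psi> ^ n"
proof (induction n rule: lucas.induct)
  case (3 n)
  have step: "x ^ Suc (Suc n) = x ^ n + x ^ Suc n" if "x\<^sup>2 = x + 1" for x :: real
  proof -
    have "x ^ Suc (Suc n) = x ^ n * x\<^sup>2" by (simp add: power2_eq_square)
    also have "\<dots> = x ^ n + x ^ Suc n" by (simp add: that algebra_simps)
    finally show ?thesis .
  qed
  have "\<phi>\<^sup>2 = \<phi> + 1" "\<psi>\<^sup>2 = \<psi> + 1"
    by (simp_all add: \<phi>_def \<psi>_def field_simps power2_eq_square)
  with 3 show ?case by (simp add: step del: power_Suc)
qed (simp_all add: \<phi>_def \<psi>_def field_simps)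

lemma fib_closed_form_sqrt5: "real (fib n) * sqrt 5 = \<phi> ^ n - \<psi> ^ n"
  using fib_closed_form[of n] by (simp add: \<phi>_def \<psi>_def)

lemma lucas_square_conv_lucas_double: "(real (lucas m))\<^sup>2 = real (lucas (2 * m)) + 2 * (-1) ^ m"
proof -
  have "(real (lucas m))\<^sup>2 = (\<phi> ^ m)\<^sup>2 + (\<psi> ^ m)\<^sup>2 + 2 * (\<phi> * \<psi>) ^ m"
    by (simp add: lucas_closed_form power2_sum power_mult_distrib)
  then show ?thesis
    by (simp add: lucas_closed_form phi_times_psi mult.commute flip: power_mult)
qed

lemma lucas_square_conv_fib_square: "(int (lucas m))\<^sup>2 = 5 * (int (fib m))\<^sup>2 + 4 * (-1) ^ m"
proof (rule of_int_eq_iff[where 'a = real, THEN iffD1])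
  have "(real (lucas m))\<^sup>2 = (real (fib m) * sqrt 5)\<^sup>2 + 4 * (\<phi> * \<psi>) ^ m"
    by (simp add: lucas_closed_form fib_closed_form_sqrt5 power2_eq_square power_mult_distrib
        algebra_simps)
  then show "real_of_int ((int (lucas m))\<^sup>2) = real_of_int (5 * (int (fib m))\<^sup>2 + 4 * (-1) ^ m)"
    by (simp add: phi_times_psi power_mult_distrib)
qed

lemma lucas_add_double_minus:
  "real (lucas (m + 2 * k)) - (-1) ^ k * real (lucas m) = 5 * real (fib k) * real (fib (m + k))"
proof -
  have "5 * real (fib k) * real (fib (m + k))
      = (real (fib k) * sqrt 5) * (real (fib (m + k)) * sqrt 5)"
    by simp
  also have "\<dots> = \<phi> ^ (m + 2 * k) + \<psi> ^ (m + 2 * k) - (\<phi> * \<psi>) ^ k * (\<phi> ^ m + \<psi> ^ m)"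
    by (simp only: fib_closed_form_sqrt5 power_add mult_2 power_mult_distrib) (simp add: algebra_simps)
  finally show ?thesis
    by (simp add: lucas_closed_form phi_times_psi)
qed

lemma lucas_add_double_plus:
  "real (lucas (m + 2 * k)) + (-1) ^ k * real (lucas m) = real (lucas k) * real (lucas (m + k))"
proof -
  have "real (lucas k) * real (lucas (m + k))
      = \<phi> ^ (m + 2 * k) + \<psi> ^ (m + 2 * k) + (\<phi> * \<psi>) ^ k * (\<phi> ^ m + \<psi> ^ m)"
    by (simp only: lucas_closed_form power_add mult_2 power_mult_distrib) (simp add: algebra_simps)
  then show ?thesis
    by (simp add: lucas_closed_form phi_times_psi)
qed

lemma lucas_add_3: "lucas (n + 3) = lucas n + 2 * lucas (n + 1)"
  by (simp add: numeral_eq_Suc)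

lemma lucas_add_4: "lucas (n + 4) + lucas n = 3 * lucas (n + 2)"
  by (simp add: numeral_eq_Suc)

lemma even_lucas_iff: "even (lucas n) \<longleftrightarrow> 3 dvd n"
proof (induction n rule: less_induct)
  case (less n)
  show ?case
  proof (cases "n < 3")
    case True
    then consider "n = 0" | "n = 1" | "n = 2" by linarith
    moreover have "lucas 2 = 3" by (simp add: numeral_2_eq_2)
    ultimately show ?thesis by cases simp_all
  next
    case False
    then obtain m where "n = m + 3" by (metis add.commute le_iff_add not_less)
    then show ?thesis using less[of m] by (simp add: lucas_add_3)
  qed
qed

lemma coprime_fib_add_2: "coprime (fib n) (fib (n + 2))"
  using coprime_fib_Suc_nat[of n] by (simp add: fib_plus_2 coprime_iff_gcd_eq_1 add.commute)

lemma sum_alternating_sign: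
  "(\<Sum>i=1..k. (-1 :: 'a :: ring_1) ^ (n + i)) = (if even k then 0 else (-1) ^ (n + 1))"
  by (induction k) (auto simp: power_add)

lemma Gcd_range_mult_coprime:
  fixes f :: "'a \<Rightarrow> nat"
  assumes "coprime (f a) (f b)"
  shows "Gcd (range (\<lambda>x. c * f x)) = c"
proof (rule dvd_antisym)
  have "Gcd (range (\<lambda>x. c * f x)) dvd gcd (c * f a) (c * f b)"
    by (auto intro!: gcd_greatest Gcd_dvd)
  also have "gcd (c * f a) (c * f b) = c"
    using assms by (simp add: gcd_mult_left coprime_iff_gcd_eq_1)
  finally show "Gcd (range (\<lambda>x. c * f x)) dvd c" .
qed (auto intro: Gcd_greatest)

definition lucas_square_sum :: "nat \<Rightarrow> nat \<Rightarrow> nat" where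
  "lucas_square_sum k n = (\<Sum>i=1..k. (lucas (n + i))\<^sup>2)"

lemma lucas_sq_gcd_conv_Gcd_range: "lucas_sq_gcd k = Gcd (range (lucas_square_sum k))"
  by (simp add: lucas_sq_gcd_def lucas_square_sum_def full_SetCompr_eq)

lemma lucas_square_sum_telescope:
  "real (lucas_square_sum k n)
     = real (lucas (2 * n + 1 + 2 * k)) - real (lucas (2 * n + 1)) + 2 * (\<Sum>i=1..k. (-1) ^ (n + i))"
proof (induction k)
  case (Suc k)
  have "lucas (2 * n + 1 + 2 * Suc k) = lucas (2 * (n + Suc k)) + lucas (2 * n + 1 + 2 * k)"
    using lucas.simps(3)[of "2 * n + 2 * k + 1"] by (simp add: algebra_simps)
  with Suc show ?case
    using lucas_square_conv_lucas_double[of "n + Suc k"] by (simp add: lucas_square_sum_def)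
qed (simp add: lucas_square_sum_def)

lemma lucas_square_sum_even:
  assumes "even k"
  shows "lucas_square_sum k n = 5 * fib k * fib (2 * n + k + 1)"
proof -
  have "real (lucas_square_sum k n) = real (lucas (2 * n + 1 + 2 * k)) - real (lucas (2 * n + 1))"
    using lucas_square_sum_telescope[of k n] sum_alternating_sign[where k = k and n = n] assms by simp
  also have "\<dots> = 5 * real (fib k) * real (fib (2 * n + k + 1))"
    using lucas_add_double_minus[of "2 * n + 1" k] assms by (simp add: algebra_simps)
  finally have "real (lucas_square_sum k n) = real (5 * fib k * fib (2 * n + k + 1))"
    by simp
  then show ?thesis
    by (simp only: of_nat_eq_iff)
qed

lemma lucas_square_sum_odd:
  assumes "odd k"
  shows "int (lucas_square_sum k n) = int (lucas k) * int (lucas (2 * n + k + 1)) - 2 * (-1) ^ n"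
proof (rule of_int_eq_iff[where 'a = real, THEN iffD1])
  have "real (lucas_square_sum k n)
      = real (lucas (2 * n + 1 + 2 * k)) - real (lucas (2 * n + 1)) - 2 * (-1) ^ n"
    using lucas_square_sum_telescope[of k n] sum_alternating_sign[where k = k and n = n] assms
    by simp
  also have "\<dots> = real (lucas k) * real (lucas (2 * n + k + 1)) - 2 * (-1) ^ n"
    using lucas_add_double_plus[of "2 * n + 1" k] assms by (simp add: algebra_simps)
  finally show "real_of_int (int (lucas_square_sum k n))
      = real_of_int (int (lucas k) * int (lucas (2 * n + k + 1)) - 2 * (-1) ^ n)"
    by simp
qed

lemma lucas_square_sum_odd_not_dvd_5:
  assumes "odd k"
  shows "\<not> 5 dvd lucas_square_sum k n"
proof
  have "int (lucas_square_sum k n) = (\<Sum>i=1..k. (int (lucas (n + i)))\<^sup>2)"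
    by (simp add: lucas_square_sum_def)
  also have "\<dots> = 5 * (\<Sum>i=1..k. (int (fib (n + i)))\<^sup>2) + 4 * (\<Sum>i=1..k. (-1) ^ (n + i))"
    by (simp add: lucas_square_conv_fib_square sum.distrib sum_distrib_left)
  also have "\<dots> = 5 * (\<Sum>i=1..k. (int (fib (n + i)))\<^sup>2) - 4 * (-1) ^ n"
    using assms sum_alternating_sign[where k = k and n = n and 'a = int] by simp
  finally have S: "int (lucas_square_sum k n) + 4 * (-1) ^ n = 5 * (\<Sum>i=1..k. (int (fib (n + i)))\<^sup>2)"
    by simp
  assume "5 dvd lucas_square_sum k n"
  then have "(5 :: int) dvd 4 * (-1) ^ n"
    using S by (metis dvd_add_right_iff dvd_triv_left int_dvd_int_iff of_nat_numeral)
  then show False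
    by (cases "even n") auto
qed

lemma even_lucas_square_sum_iff:
  assumes "odd k"
  shows "even (lucas_square_sum k n) \<longleftrightarrow> 3 dvd k \<or> 3 dvd (2 * n + k + 1)"
proof -
  have "even (lucas_square_sum k n) \<longleftrightarrow> even (int (lucas_square_sum k n))"
    by simp
  also have "\<dots> \<longleftrightarrow> even (lucas k * lucas (2 * n + k + 1))"
    by (simp add: lucas_square_sum_odd[OF assms] flip: of_nat_mult)
  finally show ?thesis
    by (simp add: even_lucas_iff)
qed

lemma lucas_sq_gcd_even:
  assumes "even k"
  shows "lucas_sq_gcd k = 5 * fib k"
proof -
  have "coprime (fib (2 * 0 + k + 1)) (fib (2 * 1 + k + 1))"
    using coprime_fib_add_2[of "k + 1"] by (simp add: add.commute)
  then have "Gcd (range (\<lambda>n. 5 * fib k * fib (2 * n + k + 1))) = 5 * fib k"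
    by (rule Gcd_range_mult_coprime)
  then show ?thesis
    by (simp add: lucas_sq_gcd_conv_Gcd_range lucas_square_sum_even[OF assms])
qed

lemma lucas_sq_gcd_odd_dvd_2:
  assumes "odd k"
  shows "lucas_sq_gcd k dvd 2"
proof -
  define c where "c = lucas_sq_gcd k"
  have c_dvd: "c dvd lucas_square_sum k n" for n
    by (simp add: c_def lucas_sq_gcd_conv_Gcd_range Gcd_dvd)
  have "int (lucas_square_sum k 0) + int (lucas_square_sum k 2) - 3 * int (lucas_square_sum k 1)
      = int (lucas k) * (int (lucas (k + 1 + 4)) + int (lucas (k + 1)) - 3 * int (lucas (k + 1 + 2))) - 10"
    by (simp add: lucas_square_sum_odd[OF assms] algebra_simps del: lucas.simps)
  also have "int (lucas (k + 1 + 4)) + int (lucas (k + 1)) = 3 * int (lucas (k + 1 + 2))"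
    using arg_cong[OF lucas_add_4[of "k + 1"], of int] by simp
  finally have "int (lucas_square_sum k 0) + int (lucas_square_sum k 2)
      - 3 * int (lucas_square_sum k 1) = -10"
    by simp
  then have "int c dvd 10"
    by (metis c_dvd dvd_add dvd_diff dvd_mult dvd_minus_iff int_dvd_int_iff)
  then have "c dvd 2 * 5"
    using int_dvd_int_iff[of c 10] by simp
  moreover have "prime (5 :: nat)"
    by simp
  then have "coprime c 5"
    using c_dvd[of 0] lucas_square_sum_odd_not_dvd_5[OF assms]
    by (metis coprime_commute dvd_trans prime_imp_coprime)
  ultimately show ?thesis
    unfolding c_def by (metis coprime_dvd_mult_left_iff)
qed

lemma lucas_sq_gcd_odd:
  assumes "odd k"
  shows "lucas_sq_gcd k = (if 3 dvd k then 2 else 1)"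
proof (cases "3 dvd k")
  case True
  then have "2 dvd lucas_sq_gcd k"
    by (auto simp: lucas_sq_gcd_conv_Gcd_range even_lucas_square_sum_iff[OF assms] intro: Gcd_greatest)
  with True show ?thesis
    using lucas_sq_gcd_odd_dvd_2[OF assms] by (simp add: dvd_antisym)
next
  case False
  then have "\<not> 3 dvd (2 * 0 + k + 1) \<or> \<not> 3 dvd (2 * 1 + k + 1)"
    by presburger
  then obtain n where "\<not> 3 dvd (2 * n + k + 1)"
    by blast
  then have "odd (lucas_square_sum k n)"
    using False by (simp add: even_lucas_square_sum_iff[OF assms])
  then have "odd (lucas_sq_gcd k)"
    by (metis dvd_trans lucas_sq_gcd_conv_Gcd_range Gcd_dvd rangeI)
  moreover have "lucas_sq_gcd k \<le> 2"
    using lucas_sq_gcd_odd_dvd_2[OF assms] by (rule dvd_imp_le) simp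
  ultimately show ?thesis
    using False by presburger
qed

theorem theorem5p4:
  fixes k :: nat
  assumes "k \<ge> 1"
  shows "(even k \<longrightarrow> lucas_sq_gcd k = 5 * fib k)
       \<and> (k mod 6 = 3 \<longrightarrow> lucas_sq_gcd k = 2)
       \<and> ((k mod 6 = 1 \<or> k mod 6 = 5) \<longrightarrow> lucas_sq_gcd k = 1)"
proof (intro conjI impI)
  assume "even k"
  then show "lucas_sq_gcd k = 5 * fib k"
    by (rule lucas_sq_gcd_even)
next
  assume "k mod 6 = 3"
  then have "odd k" "3 dvd k"
    by presburger+
  then show "lucas_sq_gcd k = 2"
    by (simp add: lucas_sq_gcd_odd)
next
  assume "k mod 6 = 1 \<or> k mod 6 = 5"
  then have "odd k" "\<not> 3 dvd k"
    by presburger+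
  then show "lucas_sq_gcd k = 1"
    by (simp add: lucas_sq_gcd_odd)
qed

end
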